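(* Let $\bar\gamma_{\mathrm{E}}>0$, $\mathcal{R}>0$ and $\alpha>0$ be fixed, and let $\bar\gamma_{\mathrm{D}}>0$ with $\bar\gamma_{\mathrm{R}}=\alpha\bar\gamma_{\mathrm{D}}$. Let $h_{\mathrm{S},\mathrm{R}},h_{\mathrm{R},\mathrm{D}},h_{\mathrm{S},\mathrm{E}},h_{\mathrm{R},\mathrm{E}}$ be independent $\mathcal{CN}(0,1)$ random variables, and define $$\mathcal{R}^{3}_{\mathrm{S}\to\mathrm{R}}=\log_2\frac{1+\bar\gamma_{\mathrm{R}}|h_{\mathrm{S},\mathrm{R}}|^2}{1+\bar\gamma_{\mathrm{E}}|h_{\mathrm{S},\mathrm{E}}|^2},\qquad \mathcal{R}^{3}_{\mathrm{R}\to\mathrm{D}}=\log_2\frac{1+\bar\gamma_{\mathrm{D}}|h_{\mathrm{R},\mathrm{D}}|^2}{1+\bar\gamma_{\mathrm{E}}|h_{\mathrm{R},\mathrm{E}}|^2},$$ $\mathcal{R}_3=\max\{\min\{\mathcal{R}^{3}_{\mathrm{S}\to\mathrm{R}},\mathcal{R}^{3}_{\mathrm{R}\to\mathrm{D}}\},0\}$ and $\mathcal{P}_3=\Pr(\mathcal{R}_3<\mathcal{R})$. Then as $\bar\gamma_{\mathrm{D}}\to\infty$, $$\mathcal{P}_3\approx\mathcal{M}_3\bar\gamma_{\mathrm{D}}^{-1},$$ in the sense that $\bar\gamma_{\mathrm{D}}\mathcal{P}_3\to\mathcal{M}_3$, where $\mathcal{M}_3=(2^{\mathcal{R}}-1)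(1+1/\alpha)+2^{\mathcal{R}}\bar\gamma_{\mathrm{E}}(1+1/\alpha)>0$.
   Context: $\mathcal{CN}(0,1)$ denotes a circularly symmetric complex Gaussian random variable with zero mean and unit variance (Rayleigh fading). The quantities model a decode-and-forward relay system where the eavesdropper overhears both source and relay; $\bar\gamma$'s are average SNRs, $\mathcal{R}_3$ the secrecy capacity and $\mathcal{P}_3$ the secrecy outage probability. *)

theory Defs
  imports "HOL-Probability.Probability"
begin

definition cn01_density :: "complex \<Rightarrow> ennreal" where
  "cn01_density z = ennreal (exp (- (cmod z)\<^sup>2) / pi)"

definition hop_rate :: "real \<Rightarrow> real \<Rightarrow> complex \<Rightarrow> complex \<Rightarrow> real" where
  "hop_rate g gE h hE = log 2 ((1 + g * (cmod h)\<^sup>2) / (1 + gE * (cmod hE)\<^sup>2))"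

definition R3 :: "real \<Rightarrow> real \<Rightarrow> real \<Rightarrow> complex \<Rightarrow> complex \<Rightarrow> complex \<Rightarrow> complex \<Rightarrow> real" where
  "R3 \<alpha> gD gE hSR hRD hSE hRE =
     max (min (hop_rate (\<alpha> * gD) gE hSR hSE) (hop_rate gD gE hRD hRE)) 0"

definition M3 :: "real \<Rightarrow> real \<Rightarrow> real \<Rightarrow> real" where
  "M3 \<alpha> gE Rt = (2 powr Rt - 1) * (1 + 1 / \<alpha>) + 2 powr Rt * gE * (1 + 1 / \<alpha>)"

end

theory Submission
  imports Defs "HOL-Real_Asymp.Real_Asymp"
begin

text \<open>If \<open>h\<close> is CN(0,1) then \<open>|h|\<^sup>2\<close> is Exp(1): the annulus \<open>t < |z|\<^sup>2 \<le> t'\<close> has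
  area \<open>\<pi> (t' - t)\<close> and density between \<open>exp (-t') / \<pi>\<close> and \<open>exp (-t) / \<pi>\<close>, so the
  Gaussian mass of the disc \<open>|z|\<^sup>2 \<le> t\<close> has derivative \<open>exp (-t)\<close>.
  A hop with main SNR \<open>g\<close> is in outage iff \<open>g |h|\<^sup>2 < a + b |h\<^sub>E|\<^sup>2\<close>, where \<open>a = 2\<^sup>R - 1\<close>
  and \<open>b = 2\<^sup>R \<gamma>\<^sub>E\<close>; for independent Exp(1) variables this has probability
  \<open>1 - exp (-a/g) / (1 + b/g) \<sim> (a + b) / g\<close>. The two hops are independent, so
  \<open>P\<^sub>3 = p\<^sub>S + p\<^sub>R - p\<^sub>S p\<^sub>R\<close> with \<open>p\<^sub>S \<sim> (a + b) / (\<alpha> \<gamma>\<^sub>D)\<close> and \<open>p\<^sub>R \<sim> (a + b) / \<gamma>\<^sub>D\<close>,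
  whence \<open>\<gamma>\<^sub>D P\<^sub>3 \<rightarrow> (a + b) (1 + 1/\<alpha>) = M\<^sub>3\<close>.\<close>

lemma constant_if_quadratic_increments:
  fixes H :: "real \<Rightarrow> real"
  assumes "convex S"
    and quad: "\<And>x y. x \<in> S \<Longrightarrow> y \<in> S \<Longrightarrow> \<bar>H y - H x\<bar> \<le> (y - x)\<^sup>2"
    and "x \<in> S" "y \<in> S"
  shows "H x = H y"
proof -
  have "(H has_field_derivative 0) (at x within S)" if x: "x \<in> S" for x
    unfolding has_field_derivative_iff
  proof (rule Lim_null_comparison)
    show "\<forall>\<^sub>F y in at x within S. norm ((H y - H x) / (y - x)) \<le> \<bar>y - x\<bar>"
      unfolding eventually_at_filter
    proof (rule always_eventually, intro allI impI)
      fix y assume "y \<noteq> x" "y \<in> S"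
      then have "\<bar>H y - H x\<bar> \<le> \<bar>y - x\<bar> * \<bar>y - x\<bar>"
        using quad[OF x] by (simp add: power2_eq_square abs_mult_self_eq)
      with \<open>y \<noteq> x\<close> show "norm ((H y - H x) / (y - x)) \<le> \<bar>y - x\<bar>"
        by (simp add: abs_divide divide_le_eq)
    qed
    show "((\<lambda>y. \<bar>y - x\<bar>) \<longlongrightarrow> 0) (at x within S)"
      by (intro tendsto_eq_intros) auto
  qed
  then obtain c where "\<forall>z\<in>S. H z = c"
    using has_field_derivative_zero_constant[OF \<open>convex S\<close>] by blast
  with assms(3,4) show ?thesis by simp
qed

lemma exp_minus_diff_bounds:
  fixes t t' :: real
  assumes "t \<le> t'"
  shows "exp (-t') * (t' - t) \<le> exp (-t) - exp (-t')"
    and "exp (-t) - exp (-t') \<le> exp (-t) * (t' - t)"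
proof -
  define u where "u = t' - t"
  have u: "0 \<le> u" using assms by (simp add: u_def)
  have split: "exp (-t') = exp (-t) * exp (-u)" by (simp add: u_def flip: exp_add)
  have "exp (-u) * (1 + u) \<le> exp (-u) * exp u"
    by (intro mult_left_mono exp_ge_add_one_self) auto
  then have "exp (-u) * u \<le> 1 - exp (-u)" by (simp add: exp_minus field_simps)
  from mult_left_mono[OF this, of "exp (-t)"]
  show "exp (-t') * (t' - t) \<le> exp (-t) - exp (-t')"
    by (simp add: split u_def[symmetric] algebra_simps)
  have "1 - exp (-u) \<le> u" using exp_ge_add_one_self[of "-u"] by simp
  from mult_left_mono[OF this, of "exp (-t)"]
  show "exp (-t) - exp (-t') \<le> exp (-t) * (t' - t)"
    by (simp add: split u_def[symmetric] algebra_simps)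
qed

lemma emeasure_density_ge_const:
  assumes [measurable]: "f \<in> borel_measurable M" "A \<in> sets M"
    and "\<And>x. x \<in> A \<Longrightarrow> c \<le> f x"
  shows "c * emeasure M A \<le> emeasure (density M f) A"
proof -
  have "c * emeasure M A = (\<integral>\<^sup>+x. c * indicator A x \<partial>M)"
    using assms(2) by (simp add: nn_integral_cmult_indicator)
  also have "\<dots> \<le> (\<integral>\<^sup>+x. f x * indicator A x \<partial>M)"
    using assms(3) by (intro nn_integral_mono) (simp split: split_indicator)
  finally show ?thesis
    by (simp add: emeasure_density)
qed

lemma emeasure_density_le_const:
  assumes [measurable]: "f \<in> borel_measurable M" "A \<in> sets M"
    and "\<And>x. x \<in> A \<Longrightarrow> f x \<le> d"
  shows "emeasure (density M f) A \<le> d * emeasure M A"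
proof -
  have "(\<integral>\<^sup>+x. f x * indicator A x \<partial>M) \<le> (\<integral>\<^sup>+x. d * indicator A x \<partial>M)"
    using assms(3) by (intro nn_integral_mono) (simp split: split_indicator)
  also have "\<dots> = d * emeasure M A"
    using assms(2) by (simp add: nn_integral_cmult_indicator)
  finally show ?thesis
    by (simp add: emeasure_density)
qed

lemma emeasure_lborel_complex_disc:
  assumes "0 \<le> t"
  shows "emeasure lborel {z::complex. (cmod z)\<^sup>2 \<le> t} = ennreal (pi * t)"
proof -
  have "{z::complex. (cmod z)\<^sup>2 \<le> t} = cball 0 (sqrt t)"
  proof (rule set_eqI)
    fix z :: complex
    have "cmod z \<le> sqrt t \<longleftrightarrow> (cmod z)\<^sup>2 \<le> t"
      by (metis real_sqrt_le_iff real_sqrt_abs abs_norm_cancel)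
    then show "z \<in> {z. (cmod z)\<^sup>2 \<le> t} \<longleftrightarrow> z \<in> cball 0 (sqrt t)"
      by simp
  qed
  then show ?thesis
    using assms by (simp add: emeasure_cball unit_ball_vol_2)
qed

lemma emeasure_lborel_complex_annulus:
  assumes "0 \<le> t" "t \<le> t'"
  shows "emeasure lborel {z::complex. t < (cmod z)\<^sup>2 \<and> (cmod z)\<^sup>2 \<le> t'} = ennreal (pi * (t' - t))"
proof -
  have "{z::complex. t < (cmod z)\<^sup>2 \<and> (cmod z)\<^sup>2 \<le> t'} =
      {z. (cmod z)\<^sup>2 \<le> t'} - {z. (cmod z)\<^sup>2 \<le> t}"
    by auto
  also have "emeasure lborel \<dots> = ennreal (pi * t') - ennreal (pi * t)"
    using assms by (subst emeasure_Diff) (auto simp: emeasure_lborel_complex_disc)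
  also have "\<dots> = ennreal (pi * (t' - t))"
    using assms by (subst ennreal_minus) (auto simp: algebra_simps)
  finally show ?thesis .
qed

definition cn01_measure :: "complex measure" where
  "cn01_measure = density lborel cn01_density"

lemma cn01_density_measurable [measurable]: "cn01_density \<in> borel_measurable borel"
  unfolding cn01_density_def[abs_def] by measurable

lemma emeasure_cn01_disc_le:
  assumes "0 \<le> t"
  shows "emeasure cn01_measure {z. (cmod z)\<^sup>2 \<le> t} \<le> ennreal t"
proof -
  have "emeasure cn01_measure {z. (cmod z)\<^sup>2 \<le> t} \<le> ennreal (1 / pi) * emeasure lborel {z::complex. (cmod z)\<^sup>2 \<le> t}"
    unfolding cn01_measure_def
    by (rule emeasure_density_le_const) (auto simp: cn01_density_def intro!: ennreal_leI divide_right_mono)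
  also have "\<dots> = ennreal t"
    using assms by (simp add: emeasure_lborel_complex_disc flip: ennreal_mult)
  finally show ?thesis .
qed

lemma emeasure_cn01_annulus_bounds:
  assumes "0 \<le> t" "t \<le> t'"
  defines "A \<equiv> {z::complex. t < (cmod z)\<^sup>2 \<and> (cmod z)\<^sup>2 \<le> t'}"
  shows "ennreal (exp (-t') * (t' - t)) \<le> emeasure cn01_measure A"
    and "emeasure cn01_measure A \<le> ennreal (exp (-t) * (t' - t))"
proof -
  have [measurable]: "A \<in> sets lborel" unfolding A_def by measurable
  have area: "emeasure lborel A = ennreal (pi * (t' - t))"
    using assms(1,2) unfolding A_def by (rule emeasure_lborel_complex_annulus)
  have "ennreal (exp (-t') * (t' - t)) = ennreal (exp (-t') / pi) * emeasure lborel A"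
    using assms(1,2) by (simp add: area flip: ennreal_mult)
  also have "\<dots> \<le> emeasure cn01_measure A"
    unfolding cn01_measure_def
    by (rule emeasure_density_ge_const) (auto simp: A_def cn01_density_def intro!: ennreal_leI divide_right_mono)
  finally show "ennreal (exp (-t') * (t' - t)) \<le> emeasure cn01_measure A" .
  have "emeasure cn01_measure A \<le> ennreal (exp (-t) / pi) * emeasure lborel A"
    unfolding cn01_measure_def
    by (rule emeasure_density_le_const) (auto simp: A_def cn01_density_def intro!: ennreal_leI divide_right_mono)
  also have "\<dots> = ennreal (exp (-t) * (t' - t))"
    using assms(1,2) by (simp add: area flip: ennreal_mult)
  finally show "emeasure cn01_measure A \<le> ennreal (exp (-t) * (t' - t))" .
qed

lemma measure_cn01_disc_increment_bounds:
  assumes "0 \<le> t" "t \<le> t'"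
  defines "F \<equiv> \<lambda>s. measure cn01_measure {z. (cmod z)\<^sup>2 \<le> s}"
  shows "exp (-t') * (t' - t) \<le> F t' - F t" and "F t' - F t \<le> exp (-t) * (t' - t)"
proof -
  define A where "A = {z::complex. t < (cmod z)\<^sup>2 \<and> (cmod z)\<^sup>2 \<le> t'}"
  have sets [measurable]: "A \<in> sets cn01_measure" "{z. (cmod z)\<^sup>2 \<le> s} \<in> sets cn01_measure" for s
    by (simp_all add: cn01_measure_def A_def)
  have A_le: "emeasure cn01_measure A \<le> ennreal (exp (-t) * (t' - t))"
    and A_ge: "ennreal (exp (-t') * (t' - t)) \<le> emeasure cn01_measure A"
    using emeasure_cn01_annulus_bounds[OF assms(1,2)] by (simp_all add: A_def)
  have "emeasure cn01_measure {z. (cmod z)\<^sup>2 \<le> t} \<noteq> \<infinity>"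
    using emeasure_cn01_disc_le[OF assms(1)] by (auto simp: top_unique)
  moreover have "emeasure cn01_measure A \<noteq> \<infinity>"
    using A_le by (auto simp: top_unique)
  moreover have "{z. (cmod z)\<^sup>2 \<le> t'} = {z. (cmod z)\<^sup>2 \<le> t} \<union> A"
    "{z. (cmod z)\<^sup>2 \<le> t} \<inter> A = {}"
    using assms(2) by (auto simp: A_def)
  ultimately have "F t' - F t = measure cn01_measure A"
    unfolding F_def by (simp add: measure_Union)
  moreover have "emeasure cn01_measure A = ennreal (measure cn01_measure A)"
    using \<open>emeasure cn01_measure A \<noteq> \<infinity>\<close> by (simp add: emeasure_eq_ennreal_measure)
  ultimately show "exp (-t') * (t' - t) \<le> F t' - F t" "F t' - F t \<le> exp (-t) * (t' - t)"
    using A_le A_ge assms by (simp_all add: ennreal_le_iff)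
qed

text \<open>The disc mass has the same increments as \<open>1 - exp (-t)\<close> up to a quadratic error,
  so the two differ by a constant; both vanish at 0.\<close>
lemma measure_cn01_disc:
  assumes "0 \<le> t"
  shows "measure cn01_measure {z. (cmod z)\<^sup>2 \<le> t} = 1 - exp (-t)"
proof -
  define F where "F s = measure cn01_measure {z. (cmod z)\<^sup>2 \<le> s}" for s
  define H where "H s = F s - (1 - exp (-s))" for s
  have increment: "\<bar>H y - H x\<bar> \<le> (y - x)\<^sup>2" if "0 \<le> x" "x \<le> y" for x y
  proof -
    have F: "exp (-y) * (y - x) \<le> F y - F x" "F y - F x \<le> exp (-x) * (y - x)"
      using measure_cn01_disc_increment_bounds[OF that] by (simp_all add: F_def)
    have E: "exp (-y) * (y - x) \<le> exp (-x) - exp (-y)" "exp (-x) - exp (-y) \<le> exp (-x) * (y - x)"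
      using exp_minus_diff_bounds[OF that(2)] by simp_all
    have "\<bar>H y - H x\<bar> \<le> (exp (-x) - exp (-y)) * (y - x)"
      using F E unfolding H_def by (simp add: abs_le_iff algebra_simps)
    also have "\<dots> \<le> (exp (-x) * (y - x)) * (y - x)"
      using E that by (intro mult_right_mono) auto
    also have "\<dots> \<le> 1 * (y - x) * (y - x)"
      using that by (intro mult_right_mono) auto
    finally show ?thesis by (simp add: power2_eq_square)
  qed
  have "H t = H 0"
  proof (rule constant_if_quadratic_increments[where H = H and S = "{0..}"])
    fix x y :: real assume "x \<in> {0..}" "y \<in> {0..}"
    then show "\<bar>H y - H x\<bar> \<le> (y - x)\<^sup>2"
      using increment[of x y] increment[of y x] by (cases "x \<le> y") (auto simp: abs_minus_commute power2_commute)
  qed (use assms in auto)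
  moreover have "F 0 = 0"
    using emeasure_cn01_disc_le[of 0] by (simp add: F_def measure_def)
  ultimately show ?thesis by (simp add: H_def F_def)
qed

lemma cn01_norm_sq_exponential:
  assumes "distributed M lborel h cn01_density"
  shows "distributed M lborel (\<lambda>\<omega>. (cmod (h \<omega>))\<^sup>2) (exponential_density 1)"
proof -
  have [measurable]: "h \<in> borel_measurable M"
    using distributed_measurable[OF assms] by simp
  show ?thesis
  proof (rule exponential_distributedI)
    fix t :: real assume "0 \<le> t"
    have "emeasure M {\<omega> \<in> space M. (cmod (h \<omega>))\<^sup>2 \<le> t} = emeasure (distr M lborel h) {z. (cmod z)\<^sup>2 \<le> t}"
      by (subst emeasure_distr) (auto intro!: arg_cong[where f = "emeasure M"])
    also have "\<dots> = emeasure cn01_measure {z. (cmod z)\<^sup>2 \<le> t}"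
      by (simp add: distributed_distr_eq_density[OF assms] cn01_measure_def)
    also have "\<dots> = ennreal (measure cn01_measure {z. (cmod z)\<^sup>2 \<le> t})"
      using emeasure_cn01_disc_le[OF \<open>0 \<le> t\<close>]
      by (intro emeasure_eq_ennreal_measure) (auto simp: top_unique)
    also have "\<dots> = ennreal (1 - exp (-t))"
      using measure_cn01_disc[OF \<open>0 \<le> t\<close>] by simp
    finally show "emeasure M {\<omega> \<in> space M. (cmod (h \<omega>))\<^sup>2 \<le> t} = 1 - ennreal (exp (- t * 1))"
      by (simp add: ennreal_minus ennreal_1[symmetric] del: ennreal_1)
  qed simp_all
qed

lemma AE_exponential_nonneg: "AE x in density lborel (exponential_density 1). 0 \<le> x"
  by (subst AE_density) (auto simp: exponential_density_def)

lemma emeasure_exponential_atLeast: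
  assumes "0 \<le> u"
  shows "emeasure (density lborel (exponential_density 1)) {u..} = ennreal (exp (-u))"
proof -
  have "(\<integral>\<^sup>+x. ennreal (exponential_density 1 x) * indicator {u..} x \<partial>lborel) = ennreal (0 - (- exp (-u)))"
  proof (rule nn_integral_FTC_atLeast)
    fix x assume "u \<le> x"
    then have "exponential_density 1 x = exp (-x)"
      using assms by (simp add: exponential_density_def)
    then show "((\<lambda>x. - exp (-x)) has_real_derivative exponential_density 1 x) (at x)"
      by (auto intro!: derivative_eq_intros)
  next
    show "((\<lambda>x::real. - exp (-x)) \<longlongrightarrow> 0) at_top"
      by real_asymp
  qed (simp_all add: exponential_density_def)
  then show ?thesis
    by (simp add: emeasure_density)
qed

lemma nn_integral_exponential_exp:
  assumes "0 \<le> s"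
  shows "(\<integral>\<^sup>+y. ennreal (exp (- s * y)) \<partial>density lborel (exponential_density 1)) = ennreal (1 / (1 + s))"
proof -
  define k where "k = 1 + s"
  have k: "0 < k" using assms by (simp add: k_def)
  have "(\<integral>\<^sup>+y. ennreal (exp (- s * y)) \<partial>density lborel (exponential_density 1))
      = (\<integral>\<^sup>+y. ennreal (exp (- k * y)) * indicator {0..} y \<partial>lborel)"
    by (subst nn_integral_density)
      (auto intro!: nn_integral_cong simp: exponential_density_def k_def algebra_simps
        split: split_indicator simp flip: exp_add ennreal_mult')
  also have "\<dots> = ennreal (0 - (- exp (- k * 0) / k))"
  proof (rule nn_integral_FTC_atLeast)
    fix x :: real
    show "((\<lambda>y. - exp (- k * y) / k) has_real_derivative exp (- k * x)) (at x)"
      using k by (auto intro!: derivative_eq_intros)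
  next
    show "((\<lambda>y. - exp (- k * y) / k) \<longlongrightarrow> 0) at_top"
      using k by real_asymp
  qed simp_all
  finally show ?thesis by (simp add: k_def)
qed

lemma emeasure_exponential_pair_affine_le:
  assumes "0 < g" "0 \<le> a" "0 \<le> b"
  defines "E \<equiv> density lborel (exponential_density 1)"
  shows "emeasure (E \<Otimes>\<^sub>M E) {p. a + b * snd p \<le> g * fst p} = ennreal (exp (-a/g) / (1 + b/g))"
proof -
  interpret E: prob_space E
    unfolding E_def by (rule prob_space_exponential_density) simp
  interpret EE: pair_prob_space E E ..
  define S where "S = {p::real \<times> real. a + b * snd p \<le> g * fst p}"
  have "S = {p \<in> space (lborel \<Otimes>\<^sub>M lborel). a + b * snd p \<le> g * fst p}"
    by (auto simp: S_def space_pair_measure)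
  also have "\<dots> \<in> sets (lborel \<Otimes>\<^sub>M lborel)"
    by measurable
  finally have S [measurable]: "S \<in> sets (E \<Otimes>\<^sub>M E)"
    unfolding E_def by (subst sets_pair_measure_cong[of _ lborel _ lborel]) simp_all
  have slice: "emeasure E ((\<lambda>x. (x, y)) -` S) = ennreal (exp (-a/g)) * ennreal (exp (- (b/g) * y))"
    if "0 \<le> y" for y
  proof -
    have "(\<lambda>x. (x, y)) -` S = {(a + b * y) / g ..}"
      using \<open>0 < g\<close> by (auto simp: S_def field_simps)
    then have "emeasure E ((\<lambda>x. (x, y)) -` S) = ennreal (exp (- ((a + b * y) / g)))"
      unfolding E_def using that assms by (simp add: emeasure_exponential_atLeast)
    then show ?thesis
      by (simp add: add_divide_distrib flip: ennreal_mult' exp_add)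
  qed
  have "emeasure (E \<Otimes>\<^sub>M E) S = (\<integral>\<^sup>+y. emeasure E ((\<lambda>x. (x, y)) -` S) \<partial>E)"
    using S by (rule EE.emeasure_pair_measure_alt2)
  also have "\<dots> = (\<integral>\<^sup>+y. ennreal (exp (-a/g)) * ennreal (exp (- (b/g) * y)) \<partial>E)"
    using AE_exponential_nonneg unfolding E_def[symmetric] by (intro nn_integral_cong_AE) (auto simp: slice)
  also have "\<dots> = ennreal (exp (-a/g)) * ennreal (1 / (1 + b/g))"
    using nn_integral_exponential_exp[of "b/g"] assms unfolding E_def
    by (subst nn_integral_cmult) simp_all
  also have "\<dots> = ennreal (exp (-a/g) / (1 + b/g))"
    using assms by (simp flip: ennreal_mult')
  finally show ?thesis
    by (simp add: S_def)
qed

lemma (in prob_space) prob_exponential_less_affine: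
  assumes X: "distributed M lborel X (exponential_density 1)"
    and Y: "distributed M lborel Y (exponential_density 1)"
    and indep: "indep_var borel X borel Y"
    and "0 < g" "0 \<le> a" "0 \<le> b"
  shows "prob {\<omega> \<in> space M. g * X \<omega> < a + b * Y \<omega>} = 1 - exp (-a/g) / (1 + b/g)"
proof -
  define E where "E = density lborel (exponential_density 1)"
  have [measurable]: "X \<in> borel_measurable M" "Y \<in> borel_measurable M"
    using distributed_measurable[OF X] distributed_measurable[OF Y] by simp_all
  have "distr M borel X = E" "distr M borel Y = E"
    using distributed_distr_eq_density[OF X] distributed_distr_eq_density[OF Y]
    by (simp_all add: E_def cong: distr_cong)
  then have joint: "distr M (borel \<Otimes>\<^sub>M borel) (\<lambda>\<omega>. (X \<omega>, Y \<omega>)) = E \<Otimes>\<^sub>M E"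
    using indep unfolding indep_var_distribution_eq by simp
  define S where "S = {p::real \<times> real. a + b * snd p \<le> g * fst p}"
  have "S = {p \<in> space (borel \<Otimes>\<^sub>M borel). a + b * snd p \<le> g * fst p}"
    by (auto simp: S_def space_pair_measure)
  also have "\<dots> \<in> sets (borel \<Otimes>\<^sub>M borel)"
    by measurable
  finally have [measurable]: "S \<in> sets (borel \<Otimes>\<^sub>M borel)" .
  have "prob {\<omega> \<in> space M. a + b * Y \<omega> \<le> g * X \<omega>} =
      prob ((\<lambda>\<omega>. (X \<omega>, Y \<omega>)) -` S \<inter> space M)"
    by (auto simp: S_def intro!: arg_cong[where f = prob])
  also have "\<dots> = measure (distr M (borel \<Otimes>\<^sub>M borel) (\<lambda>\<omega>. (X \<omega>, Y \<omega>))) S"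
    by (rule measure_distr[symmetric]) measurable
  also have "\<dots> = measure (E \<Otimes>\<^sub>M E) S"
    by (simp add: joint)
  also have "\<dots> = exp (-a/g) / (1 + b/g)"
    using emeasure_exponential_pair_affine_le[OF assms(4-6)] assms(4-6)
    by (simp add: measure_def S_def E_def)
  finally have "prob {\<omega> \<in> space M. a + b * Y \<omega> \<le> g * X \<omega>} = exp (-a/g) / (1 + b/g)" .
  moreover have "{\<omega> \<in> space M. g * X \<omega> < a + b * Y \<omega>} =
      space M - {\<omega> \<in> space M. a + b * Y \<omega> \<le> g * X \<omega>}"
    by auto
  ultimately show ?thesis
    by (simp add: prob_compl)
qed

lemma (in prob_space) indep_vars_imp_indep_var:
  assumes "indep_vars M' X I" "i \<in> I" "j \<in> I" "i \<noteq> j"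
  shows "indep_var (M' i) (X i) (M' j) (X j)"
proof -
  have "indep_var (PiM {i} M') (\<lambda>\<omega>. restrict (\<lambda>k. X k \<omega>) {i})
      (PiM {j} M') (\<lambda>\<omega>. restrict (\<lambda>k. X k \<omega>) {j})"
    using assms by (intro indep_var_restrict) auto
  then have "indep_var (M' i) ((\<lambda>f. f i) \<circ> (\<lambda>\<omega>. restrict (\<lambda>k. X k \<omega>) {i}))
      (M' j) ((\<lambda>f. f j) \<circ> (\<lambda>\<omega>. restrict (\<lambda>k. X k \<omega>) {j}))"
    by (rule indep_var_compose) (auto intro: measurable_component_singleton)
  then show ?thesis by (simp add: comp_def)
qed

lemma (in prob_space) indep_vars_imp_indep_var_pairs:
  assumes "indep_vars M' X I" "{i, j, k, l} \<subseteq> I" "{i, j} \<inter> {k, l} = {}"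
  shows "indep_var (M' i \<Otimes>\<^sub>M M' j) (\<lambda>\<omega>. (X i \<omega>, X j \<omega>))
    (M' k \<Otimes>\<^sub>M M' l) (\<lambda>\<omega>. (X k \<omega>, X l \<omega>))"
proof -
  have "indep_var (PiM {i, j} M') (\<lambda>\<omega>. restrict (\<lambda>m. X m \<omega>) {i, j})
      (PiM {k, l} M') (\<lambda>\<omega>. restrict (\<lambda>m. X m \<omega>) {k, l})"
    using assms by (intro indep_var_restrict) auto
  then have "indep_var
      (M' i \<Otimes>\<^sub>M M' j) ((\<lambda>f. (f i, f j)) \<circ> (\<lambda>\<omega>. restrict (\<lambda>m. X m \<omega>) {i, j}))
      (M' k \<Otimes>\<^sub>M M' l) ((\<lambda>f. (f k, f l)) \<circ> (\<lambda>\<omega>. restrict (\<lambda>m. X m \<omega>) {k, l}))"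
    by (rule indep_var_compose) (auto intro!: measurable_Pair measurable_component_singleton)
  then show ?thesis by (simp add: comp_def)
qed

lemma (in prob_space) prob_Un_indep_var:
  assumes indep: "indep_var N1 X N2 Y" and A: "A \<in> sets N1" and B: "B \<in> sets N2"
  defines "EA \<equiv> X -` A \<inter> space M" and "EB \<equiv> Y -` B \<inter> space M"
  shows "prob (EA \<union> EB) = prob EA + prob EB - prob EA * prob EB"
proof -
  have [measurable]: "X \<in> measurable M N1" "Y \<in> measurable M N2"
    using indep_var_rv1[OF indep] indep_var_rv2[OF indep] by simp_all
  have "EA \<in> events" "EB \<in> events"
    unfolding EA_def EB_def using A B by measurable
  moreover have "EA \<inter> EB = (\<lambda>\<omega>. (X \<omega>, Y \<omega>)) -` (A \<times> B) \<inter> space M"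
    by (auto simp: EA_def EB_def)
  then have "prob (EA \<inter> EB) = prob EA * prob EB"
    using indep_varD[OF indep A B] by (simp add: EA_def EB_def)
  ultimately show ?thesis
    by (simp add: measure_Un3 fmeasurable_eq_sets)
qed

lemma hop_rate_less_iff:
  assumes "0 \<le> g" "0 \<le> gE"
  shows "hop_rate g gE h hE < Rt \<longleftrightarrow>
    g * (cmod h)\<^sup>2 < (2 powr Rt - 1) + 2 powr Rt * gE * (cmod hE)\<^sup>2"
proof -
  define N where "N = 1 + g * (cmod h)\<^sup>2"
  define D where "D = 1 + gE * (cmod hE)\<^sup>2"
  have "N > 0" "D > 0"
    using assms by (simp_all add: N_def D_def add_pos_nonneg)
  have "hop_rate g gE h hE < Rt \<longleftrightarrow> log 2 (N / D) < Rt"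
    by (simp add: hop_rate_def N_def D_def)
  also have "\<dots> \<longleftrightarrow> N / D < 2 powr Rt"
    using \<open>N > 0\<close> \<open>D > 0\<close> by (simp add: log_less_iff)
  also have "\<dots> \<longleftrightarrow> N < 2 powr Rt * D"
    using \<open>D > 0\<close> by (simp add: divide_less_eq)
  also have "\<dots> \<longleftrightarrow> g * (cmod h)\<^sup>2 < (2 powr Rt - 1) + 2 powr Rt * gE * (cmod hE)\<^sup>2"
    by (simp add: N_def D_def algebra_simps)
  finally show ?thesis .
qed

definition hop_outage :: "real \<Rightarrow> real \<Rightarrow> real \<Rightarrow> real" where
  "hop_outage g gE Rt = 1 - exp (- (2 powr Rt - 1) / g) / (1 + 2 powr Rt * gE / g)"

lemma (in prob_space) prob_hop_rate_less:
  assumes h: "distributed M lborel h cn01_density" and hE: "distributed M lborel hE cn01_density"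
    and indep: "indep_var borel h borel hE"
    and "0 < g" "0 \<le> gE" "0 \<le> Rt"
  shows "prob {\<omega> \<in> space M. hop_rate g gE (h \<omega>) (hE \<omega>) < Rt} = hop_outage g gE Rt"
proof -
  have "indep_var borel ((\<lambda>z. (cmod z)\<^sup>2) \<circ> h) borel ((\<lambda>z. (cmod z)\<^sup>2) \<circ> hE)"
    using indep by (rule indep_var_compose) simp_all
  then have indep_sq: "indep_var borel (\<lambda>\<omega>. (cmod (h \<omega>))\<^sup>2) borel (\<lambda>\<omega>. (cmod (hE \<omega>))\<^sup>2)"
    by (simp add: comp_def)
  have "0 \<le> 2 powr Rt - 1" "0 \<le> 2 powr Rt * gE"
    using assms(5,6) by (simp_all add: ge_one_powr_ge_zero)
  from prob_exponential_less_affine[OF cn01_norm_sq_exponential[OF h]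
      cn01_norm_sq_exponential[OF hE] indep_sq \<open>0 < g\<close> this]
  show ?thesis
    using assms(4,5) by (simp add: hop_rate_less_iff hop_outage_def)
qed

lemma (in prob_space) prob_R3_less:
  assumes hSR: "distributed M lborel hSR cn01_density" and hRD: "distributed M lborel hRD cn01_density"
    and hSE: "distributed M lborel hSE cn01_density" and hRE: "distributed M lborel hRE cn01_density"
    and indep_S: "indep_var borel hSR borel hSE" and indep_R: "indep_var borel hRD borel hRE"
    and indep_hops: "indep_var (borel \<Otimes>\<^sub>M borel) (\<lambda>\<omega>. (hSR \<omega>, hSE \<omega>))
      (borel \<Otimes>\<^sub>M borel) (\<lambda>\<omega>. (hRD \<omega>, hRE \<omega>))"
    and "0 < gD" "0 < \<alpha>" "0 \<le> gE" "0 < Rt"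
  defines "pS \<equiv> hop_outage (\<alpha> * gD) gE Rt" and "pR \<equiv> hop_outage gD gE Rt"
  shows "prob {\<omega> \<in> space M. R3 \<alpha> gD gE (hSR \<omega>) (hRD \<omega>) (hSE \<omega>) (hRE \<omega>) < Rt} = pS + pR - pS * pR"
proof -
  define outage where "outage g = {q::complex \<times> complex. hop_rate g gE (fst q) (snd q) < Rt}" for g
  have [measurable]: "outage g \<in> sets (borel \<Otimes>\<^sub>M borel)" for g
  proof -
    have "outage g = {q \<in> space (borel \<Otimes>\<^sub>M borel). hop_rate g gE (fst q) (snd q) < Rt}"
      by (auto simp: outage_def space_pair_measure)
    also have "\<dots> \<in> sets (borel \<Otimes>\<^sub>M borel)"
      unfolding hop_rate_def by measurable
    finally show ?thesis .
  qed
  have preimage: "(\<lambda>\<omega>. (h \<omega>, h' \<omega>)) -` outage g \<inter> space M =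
      {\<omega> \<in> space M. hop_rate g gE (h \<omega>) (h' \<omega>) < Rt}"
    for h h' :: "'a \<Rightarrow> complex" and g
    by (auto simp: outage_def)
  have "prob ((\<lambda>\<omega>. (hSR \<omega>, hSE \<omega>)) -` outage (\<alpha> * gD) \<inter> space M) = pS"
    using prob_hop_rate_less[OF hSR hSE indep_S] assms(8-11) by (simp add: preimage pS_def)
  moreover have "prob ((\<lambda>\<omega>. (hRD \<omega>, hRE \<omega>)) -` outage gD \<inter> space M) = pR"
    using prob_hop_rate_less[OF hRD hRE indep_R] assms(8-11) by (simp add: preimage pR_def)
  moreover have "{\<omega> \<in> space M. R3 \<alpha> gD gE (hSR \<omega>) (hRD \<omega>) (hSE \<omega>) (hRE \<omega>) < Rt} =
      (\<lambda>\<omega>. (hSR \<omega>, hSE \<omega>)) -` outage (\<alpha> * gD) \<inter> space M \<union>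
      (\<lambda>\<omega>. (hRD \<omega>, hRE \<omega>)) -` outage gD \<inter> space M"
    using \<open>0 < Rt\<close> by (auto simp: R3_def outage_def)
  ultimately show ?thesis
    using prob_Un_indep_var[OF indep_hops] by simp
qed

lemma tendsto_hop_outage_union:
  assumes "0 < gE" "0 < Rt" "0 < \<alpha>"
  shows "((\<lambda>g. g * (hop_outage (\<alpha> * g) gE Rt + hop_outage g gE Rt
      - hop_outage (\<alpha> * g) gE Rt * hop_outage g gE Rt)) \<longlongrightarrow> M3 \<alpha> gE Rt) at_top"
proof -
  define a where "a = 2 powr Rt - 1"
  define b where "b = 2 powr Rt * gE"
  have "0 < a" "0 < b"
    using assms by (simp_all add: a_def b_def)
  have outage: "hop_outage g gE Rt = 1 - exp (- a / g) / (1 + b / g)" for g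
    by (simp add: hop_outage_def a_def b_def)
  have "M3 \<alpha> gE Rt = a * inverse \<alpha> + b * inverse \<alpha> + (a + b)"
    by (simp add: M3_def a_def b_def divide_inverse algebra_simps)
  moreover have "((\<lambda>g. g * ((1 - exp (- a / (\<alpha> * g)) / (1 + b / (\<alpha> * g))) + (1 - exp (- a / g) / (1 + b / g))
      - (1 - exp (- a / (\<alpha> * g)) / (1 + b / (\<alpha> * g))) * (1 - exp (- a / g) / (1 + b / g))))
      \<longlongrightarrow> a * inverse \<alpha> + b * inverse \<alpha> + (a + b)) at_top"
    using \<open>0 < a\<close> \<open>0 < b\<close> \<open>0 < \<alpha>\<close> by real_asymp
  ultimately show ?thesis
    by (simp add: outage)
qed

lemma M3_pos:
  assumes "0 < gE" "0 < Rt" "0 < \<alpha>"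
  shows "0 < M3 \<alpha> gE Rt"
  using assms unfolding M3_def by (intro add_pos_pos mult_pos_pos) simp_all

theorem theorem8:
  fixes M :: "'a measure"
    and hSR hRD hSE hRE :: "'a \<Rightarrow> complex"
    and gE Rt \<alpha> :: real
  assumes "prob_space M"
    and "gE > 0" and "Rt > 0" and "\<alpha> > 0"
    and "distributed M lborel hSR cn01_density"
    and "distributed M lborel hRD cn01_density"
    and "distributed M lborel hSE cn01_density"
    and "distributed M lborel hRE cn01_density"
    and "prob_space.indep_vars M (\<lambda>_. borel) (\<lambda>i. [hSR, hRD, hSE, hRE] ! i) {0..<4}"
  shows "M3 \<alpha> gE Rt > 0 \<and>
    ((\<lambda>gD. gD * measure M {\<omega> \<in> space M. R3 \<alpha> gD gE (hSR \<omega>) (hRD \<omega>) (hSE \<omega>) (hRE \<omega>) < Rt})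
       \<longlongrightarrow> M3 \<alpha> gE Rt) at_top"
proof -
  interpret prob_space M by fact
  note indep = assms(9)
  have indep_hop: "indep_var borel hSR borel hSE" "indep_var borel hRD borel hRE"
    using indep_vars_imp_indep_var[OF indep, of 0 2] indep_vars_imp_indep_var[OF indep, of 1 3] by simp_all
  have indep_hops: "indep_var (borel \<Otimes>\<^sub>M borel) (\<lambda>\<omega>. (hSR \<omega>, hSE \<omega>))
      (borel \<Otimes>\<^sub>M borel) (\<lambda>\<omega>. (hRD \<omega>, hRE \<omega>))"
    using indep_vars_imp_indep_var_pairs[OF indep, of 0 2 1 3] by simp
  have "\<forall>\<^sub>F gD in at_top.
      gD * (hop_outage (\<alpha> * gD) gE Rt + hop_outage gD gE Rt - hop_outage (\<alpha> * gD) gE Rt * hop_outage gD gE Rt) =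
      gD * measure M {\<omega> \<in> space M. R3 \<alpha> gD gE (hSR \<omega>) (hRD \<omega>) (hSE \<omega>) (hRE \<omega>) < Rt}"
    using eventually_gt_at_top[of 0]
  proof eventually_elim
    case (elim gD)
    show ?case
      using prob_R3_less[OF assms(5-8) indep_hop indep_hops elim assms(4) _ assms(3)] assms(2) by simp
  qed
  from tendsto_cong[OF this] tendsto_hop_outage_union[OF assms(2-4)] M3_pos[OF assms(2-4)]
  show ?thesis by simp
qed

end
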